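(* Let $(X,d)$ be a complete metric space, $\lambda>0$, and $\ell\in\mathrm{LSC}(X)$ bounded with $\inf_X\ell=0$. If $u,v\in\mathrm{LSC}(X)$ are, respectively, a bounded subsolution and a bounded supersolution of $(\mathcal{G}_\lambda)$, then $u\le v$ on $X$.
   Context: $\mathrm{LSC}(X)$ is the set of real-valued lower semicontinuous functions on $X$. Global slope: $G[u](x)=\sup_{y\neq x}\frac{(u(x)-u(y))_+}{d(x,y)}$ if $u(x)<+\infty$, $G[u](x)=+\infty$ otherwise. Equation $(\mathcal{G}_\lambda)$: $\lambda u+G[u]=\ell$ on $X$ with $\inf_Xu=0$. A subsolution is $u:X\to\mathbb{R}\cup\{+\infty\}$ with $\inf_Xu=0$ and $\lambda u+G[u]\le\ell$ on $X$; a supersolution is a lower semicontinuous $v:X\to\mathbb{R}\cup\{+\infty\}$ with $\inf_Xv=0$ and $\lambda v+G[v]\ge\ell$ on $X$. *)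

theory Defs
  imports "HOL-Analysis.Analysis"
begin

definition lsc :: "('a::topological_space \<Rightarrow> real) \<Rightarrow> bool" where
  "lsc f \<longleftrightarrow> (\<forall>x. \<forall>t. t < f x \<longrightarrow> eventually (\<lambda>y. t < f y) (at x))"

text \<open>Global slope of a real-valued function, valued in the extended reals:
  G[u](x) = sup over y different from x of (u x - u y)_+ / d(x,y).
  (The 0 inserted only matters when the space is a single point; all other
  elements are nonnegative anyway.)\<close>
definition global_slope :: "('a::metric_space \<Rightarrow> real) \<Rightarrow> 'a \<Rightarrow> ereal" where
  "global_slope u x = Sup (insert 0 ((\<lambda>y. ereal (max 0 (u x - u y) / dist x y)) ` {y. y \<noteq> x}))"

definition subsolution :: "real \<Rightarrow> ('a::metric_space \<Rightarrow> real) \<Rightarrow> ('a \<Rightarrow> real) \<Rightarrow> bool" where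
  "subsolution lam l u \<longleftrightarrow> Inf (range u) = 0 \<and>
     (\<forall>x. ereal (lam * u x) + global_slope u x \<le> ereal (l x))"

definition supersolution :: "real \<Rightarrow> ('a::metric_space \<Rightarrow> real) \<Rightarrow> ('a \<Rightarrow> real) \<Rightarrow> bool" where
  "supersolution lam l v \<longleftrightarrow> lsc v \<and> Inf (range v) = 0 \<and>
     (\<forall>x. ereal (lam * v x) + global_slope v x \<ge> ereal (l x))"

end

theory Submission
  imports Defs
begin

text \<open>A bounded subsolution \<open>u\<close> is Lipschitz, because its global slope is bounded
  by \<open>sup l\<close>; hence \<open>v - u\<close> is lower semicontinuous and bounded below. If
  \<open>u x\<^sub>0 > v x\<^sub>0\<close>, Ekeland's variational principle with \<open>\<epsilon> = \<lambda> (u x\<^sub>0 - v x\<^sub>0) / 2\<close>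
  yields a point \<open>z\<close> with \<open>u z - v z \<ge> u x\<^sub>0 - v x\<^sub>0\<close> at which \<open>v - u\<close> decreases
  at rate at most \<open>\<epsilon>\<close> in every direction. But the supersolution inequality gives a
  direction in which \<open>v\<close> decreases at rate nearly \<open>l z - \<lambda> v z\<close>, while by the
  subsolution inequality \<open>u\<close> decreases at rate at most \<open>l z - \<lambda> u z\<close>; so \<open>v - u\<close>
  decreases there at rate nearly \<open>\<lambda> (u z - v z) \<ge> 2\<epsilon>\<close>.\<close>

lemma lsc_open_superlevel:
  assumes "lsc f"
  shows "open {x. t < f x}"
proof (rule open_subopen[THEN iffD2], intro ballI)
  fix x assume "x \<in> {x. t < f x}"
  then have "eventually (\<lambda>y. t < f y) (at x)"
    using assms by (simp add: lsc_def)
  then obtain S where "open S" "x \<in> S" "\<forall>y\<in>S. y \<noteq> x \<longrightarrow> t < f y"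
    by (auto simp: eventually_at_topological)
  with \<open>x \<in> {x. t < f x}\<close> show "\<exists>T. open T \<and> x \<in> T \<and> T \<subseteq> {x. t < f x}"
    by (intro exI[of _ S]) auto
qed

lemma lsc_closed_sublevel:
  assumes "lsc f"
  shows "closed {x. f x \<le> t}"
proof -
  have "{x. f x \<le> t} = - {x. t < f x}" by auto
  then show ?thesis
    using lsc_open_superlevel[OF assms] by (simp add: closed_Compl)
qed

lemma lsc_diff_continuous:
  assumes "lsc f" and "continuous_on UNIV g"
  shows "lsc (\<lambda>x. f x - g x)"
  unfolding lsc_def
proof (intro allI impI)
  fix x t assume "t < f x - g x"
  define s where "s = (f x - g x - t) / 2"
  have "s > 0"
    using \<open>t < f x - g x\<close> by (simp add: s_def)
  have t: "t = f x - g x - 2 * s"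
    by (simp add: s_def field_simps)
  have "eventually (\<lambda>y. f x - s < f y) (at x)"
    using assms(1) \<open>s > 0\<close> by (simp add: lsc_def)
  moreover have "(g \<longlongrightarrow> g x) (at x)"
    using assms(2) by (simp add: continuous_on_def)
  then have "eventually (\<lambda>y. dist (g y) (g x) < s) (at x)"
    using \<open>s > 0\<close> by (simp add: tendsto_iff)
  ultimately show "eventually (\<lambda>y. t < f y - g y) (at x)"
    by eventually_elim (auto simp: t dist_real_def abs_less_iff)
qed

lemma difference_quotient_le_global_slope:
  assumes "y \<noteq> x"
  shows "ereal (max 0 (u x - u y) / dist x y) \<le> global_slope u x"
  unfolding global_slope_def using assms by (intro Sup_upper) auto

lemma global_slope_nonneg: "0 \<le> global_slope u x"
  unfolding global_slope_def by (intro Sup_upper) auto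

lemma less_global_slope_witness:
  assumes "0 \<le> c" and "ereal c < global_slope u x"
  obtains y where "y \<noteq> x" and "c * dist x y < u x - u y"
proof -
  obtain s where s: "s \<in> insert 0 ((\<lambda>y. ereal (max 0 (u x - u y) / dist x y)) ` {y. y \<noteq> x})"
    and "ereal c < s"
    using assms(2) unfolding global_slope_def less_Sup_iff by blast
  with assms(1) obtain y where "y \<noteq> x" and "c < max 0 (u x - u y) / dist x y"
    by auto
  moreover have "dist x y > 0" using \<open>y \<noteq> x\<close> by simp
  ultimately have "c * dist x y < max 0 (u x - u y)"
    by (simp add: pos_less_divide_eq)
  moreover have "0 \<le> c * dist x y"
    using assms(1) by simp
  ultimately have "c * dist x y < u x - u y"
    by linarith
  with \<open>y \<noteq> x\<close> show thesis
    by (rule that)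
qed

lemma subsolution_le:
  assumes "subsolution lam l u"
  shows "lam * u x \<le> l x"
proof -
  have "ereal (lam * u x) + global_slope u x \<le> ereal (l x)"
    using assms by (simp add: subsolution_def)
  then have "ereal (lam * u x) \<le> ereal (l x)"
    using global_slope_nonneg by (metis add.right_neutral add_left_mono order_trans)
  then show ?thesis by simp
qed

lemma subsolution_slope_bound:
  assumes "subsolution lam l u"
  shows "u x - u y \<le> (l x - lam * u x) * dist x y"
proof (cases "y = x")
  case False
  have "ereal (lam * u x) + ereal (max 0 (u x - u y) / dist x y)
          \<le> ereal (lam * u x) + global_slope u x"
    using difference_quotient_le_global_slope[OF False] by (rule add_left_mono)
  also have "\<dots> \<le> ereal (l x)"
    using assms by (simp add: subsolution_def)
  finally have "ereal (lam * u x + max 0 (u x - u y) / dist x y) \<le> ereal (l x)"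
    by simp
  then have "max 0 (u x - u y) / dist x y \<le> l x - lam * u x" by simp
  moreover have "dist x y > 0" using False by simp
  ultimately have "max 0 (u x - u y) \<le> (l x - lam * u x) * dist x y"
    by (simp add: pos_divide_le_eq)
  then show ?thesis by linarith
qed simp

lemma supersolution_slope_bound:
  assumes "supersolution lam l v"
  shows "ereal (l x - lam * v x) \<le> global_slope v x"
proof -
  have "ereal (l x) \<le> ereal (lam * v x) + global_slope v x"
    using assms by (simp add: supersolution_def)
  then show ?thesis
    by (cases "global_slope v x") simp_all
qed

lemma nonneg_if_Inf_range_eq_0:
  fixes u :: "'a \<Rightarrow> real"
  assumes "bdd_below (range u)" and "Inf (range u) = 0"
  shows "0 \<le> u x"
  using assms by (metis cInf_lower rangeI)

lemma subsolution_lipschitz: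
  assumes "subsolution lam l u" and "0 \<le> lam" and "bdd_below (range u)"
    and "\<And>x. l x \<le> L"
  shows "L-lipschitz_on UNIV u"
proof (rule lipschitz_onI)
  have u_nonneg: "0 \<le> u x" for x
    using assms(1,3) nonneg_if_Inf_range_eq_0 by (auto simp: subsolution_def)
  have one_sided: "u x - u y \<le> L * dist x y" for x y
  proof -
    have "u x - u y \<le> (l x - lam * u x) * dist x y"
      by (rule subsolution_slope_bound[OF assms(1)])
    also have "\<dots> \<le> L * dist x y"
      using assms(4)[of x] mult_nonneg_nonneg[OF assms(2) u_nonneg[of x]]
      by (intro mult_right_mono) auto
    finally show ?thesis .
  qed
  show "dist (u x) (u y) \<le> L * dist x y" for x y
    using one_sided[of x y] one_sided[of y x] by (simp add: dist_real_def dist_commute)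
  show "0 \<le> L"
  proof -
    fix x
    have "0 \<le> lam * u x"
      using assms(2) u_nonneg by simp
    also have "\<dots> \<le> l x"
      by (rule subsolution_le[OF assms(1)])
    also have "\<dots> \<le> L"
      by (rule assms(4))
    finally show ?thesis .
  qed
qed

text \<open>\<open>y \<in> descent_set f e x\<close> is the Bishop--Phelps order \<open>y \<preceq> x\<close> behind Ekeland's
  principle.\<close>

definition descent_set :: "('a::metric_space \<Rightarrow> real) \<Rightarrow> real \<Rightarrow> 'a \<Rightarrow> 'a set" where
  "descent_set f e x = {y. f y + e * dist x y \<le> f x}"

lemma descent_set_refl: "x \<in> descent_set f e x"
  by (simp add: descent_set_def)

lemma descent_set_trans:
  assumes "0 \<le> e" and "y \<in> descent_set f e x" and "z \<in> descent_set f e y"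
  shows "z \<in> descent_set f e x"
proof -
  have "e * dist x z \<le> e * dist x y + e * dist y z"
    using assms(1) dist_triangle[of x z y] by (metis distrib_left mult_left_mono)
  then show ?thesis
    using assms(2,3) by (simp add: descent_set_def)
qed

lemma closed_descent_set:
  assumes "\<And>t. closed {x. f x \<le> t}"
  shows "closed (descent_set f e x)"
  unfolding closed_sequential_limits
proof (intro allI impI, elim conjE)
  fix Y z assume "\<forall>n. Y n \<in> descent_set f e x" and "Y \<longlonglongrightarrow> z"
  then have Y: "f (Y n) \<le> f x - e * dist x (Y n)" for n
    by (simp add: descent_set_def algebra_simps)
  let ?c = "f x - e * dist x z"
  have "(\<lambda>n. f x - e * dist x (Y n)) \<longlonglongrightarrow> ?c"
    using \<open>Y \<longlonglongrightarrow> z\<close> by (intro tendsto_intros)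
  have "f z \<le> ?c + d" if "d > 0" for d
  proof -
    have "eventually (\<lambda>n. f x - e * dist x (Y n) < ?c + d) sequentially"
      using \<open>(\<lambda>n. f x - e * dist x (Y n)) \<longlonglongrightarrow> ?c\<close> \<open>d > 0\<close>
      by (intro order_tendstoD) auto
    then have "eventually (\<lambda>n. Y n \<in> {y. f y \<le> ?c + d}) sequentially"
      by eventually_elim (use Y in \<open>fastforce intro: order_trans\<close>)
    from Lim_in_closed_set[OF assms this _ \<open>Y \<longlonglongrightarrow> z\<close>] show ?thesis by simp
  qed
  then have "f z \<le> ?c"
    by (rule field_le_epsilon)
  then show "z \<in> descent_set f e x"
    by (simp add: descent_set_def)
qed

lemma descent_set_near_inf:
  assumes "bdd_below (range f)" and "0 < \<delta>"
  shows "\<exists>y\<in>descent_set f e x. \<forall>w\<in>descent_set f e x. f y \<le> f w + \<delta>"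
proof -
  let ?m = "Inf (f ` descent_set f e x)"
  have "bdd_below (f ` descent_set f e x)"
    using assms(1) by (meson bdd_below_mono image_mono subset_UNIV)
  then have "?m \<le> f w" if "w \<in> descent_set f e x" for w
    using that by (simp add: cInf_lower)
  moreover obtain y where "y \<in> descent_set f e x" and "f y < ?m + \<delta>"
    using cInf_lessD[of "f ` descent_set f e x" "?m + \<delta>"] descent_set_refl assms(2) by force
  ultimately show ?thesis
    by (meson add_right_mono less_imp_le order_trans)
qed

lemma descent_set_diameter:
  assumes "0 \<le> e" and "y \<in> descent_set f e x"
    and "\<forall>w\<in>descent_set f e x. f y \<le> f w + \<delta>"
    and "w \<in> descent_set f e y" and "w' \<in> descent_set f e y"
  shows "e * dist w w' \<le> 2 * \<delta>"
proof -
  have radius: "e * dist y w \<le> \<delta>" if "w \<in> descent_set f e y" for w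
  proof -
    have "f y \<le> f w + \<delta>"
      using assms(1-3) that descent_set_trans by blast
    then show ?thesis
      using that by (simp add: descent_set_def)
  qed
  have "e * dist w w' \<le> e * dist y w + e * dist y w'"
    using assms(1) dist_triangle3[of w w' y] by (metis distrib_left mult_left_mono)
  then show ?thesis
    using radius[OF assms(4)] radius[OF assms(5)] by linarith
qed

text \<open>The descent sets of a sequence of successive near-minimisers form a nest of closed sets
  whose diameters tend to \<open>0\<close>; the point of their intersection has a trivial descent set.\<close>

lemma ekeland_descent_point:
  fixes f :: "'a::complete_space \<Rightarrow> real"
  assumes closed_sublevel: "\<And>t. closed {x. f x \<le> t}" and "bdd_below (range f)" and "0 < e"
  obtains z where "z \<in> descent_set f e a" and "descent_set f e z \<subseteq> {z}"
proof -
  let ?S = "descent_set f e"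
  have "\<forall>x n. \<exists>y\<in>?S x. \<forall>w\<in>?S x. f y \<le> f w + (1/2)^n"
    using descent_set_near_inf[OF assms(2)] by simp
  then obtain step where step: "\<And>x n. step x n \<in> ?S x"
    "\<And>x n. \<forall>w\<in>?S x. f (step x n) \<le> f w + (1/2)^n"
    by metis
  define X where "X = rec_nat a (\<lambda>n x. step x n)"
  define T where "T n = ?S (X (Suc n))" for n
  have X_Suc: "X (Suc n) = step (X n) n" for n
    by (simp add: X_def)
  have T_decreasing: "T n \<subseteq> T m" if "m \<le> n" for m n
    using lift_Suc_antimono_le[of T, OF _ that] step(1) descent_set_trans \<open>0 < e\<close>
    unfolding T_def X_Suc by (metis less_imp_le subsetI)
  have T_small: "\<exists>n. \<forall>x\<in>T n. \<forall>y\<in>T n. dist x y < \<epsilon>" if "\<epsilon> > 0" for \<epsilon>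
  proof -
    obtain n where n: "(1/2::real)^n < e * \<epsilon> / 2"
      using real_arch_pow_inv[of "e * \<epsilon> / 2" "1/2"] \<open>0 < e\<close> \<open>\<epsilon> > 0\<close> by auto
    have "e * dist x y < e * \<epsilon>" if "x \<in> T n" "y \<in> T n" for x y
    proof -
      have "e * dist x y \<le> 2 * (1/2)^n"
        using descent_set_diameter[OF _ step(1) step(2)] that \<open>0 < e\<close>
        unfolding T_def X_Suc by simp
      with n show ?thesis by linarith
    qed
    then show ?thesis
      using \<open>0 < e\<close> by auto
  qed
  obtain z where z: "\<Inter>(range T) = {z}"
    using decreasing_closed_nest_sing[of T] closed_descent_set[OF closed_sublevel]
      descent_set_refl T_decreasing T_small unfolding T_def by blast
  then have z_in_T: "z \<in> T n" for n
    by blast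
  show thesis
  proof
    have "X (Suc 0) \<in> ?S a"
      using step(1) by (simp add: X_def)
    with z_in_T[of 0] show "z \<in> ?S a"
      using descent_set_trans \<open>0 < e\<close> unfolding T_def by (meson less_imp_le)
    show "?S z \<subseteq> {z}"
    proof
      fix y assume "y \<in> ?S z"
      then have "y \<in> \<Inter>(range T)"
        using z_in_T descent_set_trans \<open>0 < e\<close> unfolding T_def by (meson less_imp_le INT_I)
      with z show "y \<in> {z}" by blast
    qed
  qed
qed

theorem ekeland_variational_principle:
  fixes f :: "'a::complete_space \<Rightarrow> real"
  assumes "\<And>t. closed {x. f x \<le> t}" and "bdd_below (range f)" and "0 < e"
  obtains z where "f z \<le> f a" and "\<And>y. y \<noteq> z \<Longrightarrow> f z - e * dist z y < f y"
proof -
  obtain z where "z \<in> descent_set f e a" and "descent_set f e z \<subseteq> {z}"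
    by (rule ekeland_descent_point[OF assms])
  show thesis
  proof
    have "0 \<le> e * dist a z"
      using \<open>0 < e\<close> by simp
    with \<open>z \<in> descent_set f e a\<close> show "f z \<le> f a"
      by (simp add: descent_set_def)
    show "f z - e * dist z y < f y" if "y \<noteq> z" for y
      using \<open>descent_set f e z \<subseteq> {z}\<close> that by (force simp: descent_set_def)
  qed
qed

lemma ekeland_point_gap_le:
  assumes "subsolution lam l u" and "supersolution lam l v" and "0 < e"
    and "\<And>y. y \<noteq> z \<Longrightarrow> (v z - u z) - e * dist z y < v y - u y"
  shows "lam * (u z - v z) \<le> e"
proof (rule ccontr)
  assume "\<not> lam * (u z - v z) \<le> e"
  define b where "b = l z - lam * u z"
  have "0 \<le> b + e"
    using subsolution_le[OF assms(1)] \<open>0 < e\<close> by (simp add: b_def)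
  have "ereal (b + e) < ereal (l z - lam * v z)"
    using \<open>\<not> lam * (u z - v z) \<le> e\<close> by (simp add: b_def algebra_simps)
  also have "\<dots> \<le> global_slope v z"
    by (rule supersolution_slope_bound[OF assms(2)])
  finally obtain y where "y \<noteq> z" and v_drop: "(b + e) * dist z y < v z - v y"
    using \<open>0 \<le> b + e\<close> by (elim less_global_slope_witness)
  have u_drop: "u z - u y \<le> b * dist z y"
    using subsolution_slope_bound[OF assms(1)] by (simp add: b_def)
  have "(b + e) * dist z y = b * dist z y + e * dist z y"
    by (rule distrib_right)
  then show False
    using assms(4)[OF \<open>y \<noteq> z\<close>] v_drop u_drop by linarith
qed

theorem theorem3p14:
  fixes l u v :: "'a::{metric_space, complete_space} \<Rightarrow> real" and lam :: real
  assumes "lam > 0"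
    and "lsc l" and "bounded (range l)" and "Inf (range l) = 0"
    and "lsc u" and "bounded (range u)" and "subsolution lam l u"
    and "lsc v" and "bounded (range v)" and "supersolution lam l v"
  shows "\<forall>x. u x \<le> v x"
proof (rule ccontr)
  assume "\<not> (\<forall>x. u x \<le> v x)"
  then obtain x0 where "v x0 < u x0" by (auto simp: not_le)
  define w where "w x = v x - u x" for x
  obtain L where "\<And>x. l x \<le> L"
    using bounded_imp_bdd_above[OF assms(3)] by (auto simp: bdd_above_def)
  then have "L-lipschitz_on UNIV u"
    using assms(1,7) bounded_imp_bdd_below[OF assms(6)] by (intro subsolution_lipschitz) auto
  then have "lsc w"
    using assms(8) lipschitz_on_continuous_on unfolding w_def by (intro lsc_diff_continuous)
  have "bdd_below (range w)"
    using bounded_minus_comp[OF assms(9,6)] unfolding w_def by (rule bounded_imp_bdd_below)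
  define e where "e = lam * (u x0 - v x0) / 2"
  have "0 < e" using assms(1) \<open>v x0 < u x0\<close> by (simp add: e_def)
  obtain z where "w z \<le> w x0" and "\<And>y. y \<noteq> z \<Longrightarrow> w z - e * dist z y < w y"
    using ekeland_variational_principle[OF lsc_closed_sublevel[OF \<open>lsc w\<close>]
        \<open>bdd_below (range w)\<close> \<open>0 < e\<close>]
    by blast
  then have "lam * (u z - v z) \<le> e"
    using assms(7,10) \<open>0 < e\<close> unfolding w_def by (intro ekeland_point_gap_le)
  moreover have "lam * (u x0 - v x0) \<le> lam * (u z - v z)"
    using assms(1) \<open>w z \<le> w x0\<close> unfolding w_def by (intro mult_left_mono) auto
  ultimately show False
    using \<open>0 < e\<close> unfolding e_def by linarith
qed

end
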